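(* Let $q$ be a power of a prime $p$, and let $h(x) = x^6 + a_1 x^5 + a_2 x^4 + a_3 x^3 + a_2 q x^2 + a_1 q^2 x + q^3$ with $a_1,a_2,a_3 \in \mathbb{Z}$. Then $h(x) \in W_q(3)$ if and only if all of the following hold: (a) $|a_1| \leq 6\sqrt{q}$; (b* ) $4\sqrt{q}\,|a_1| - 9q \leq a_2$; (b) $a_2 \leq \frac{1}{3}a_1^2 + 3q$; (c) $-\frac{2}{27}a_1^3 + \frac{1}{3}a_1a_2 + qa_1 - \frac{2}{27}(a_1^2 - 3a_2 + 9q)^{3/2} \leq a_3 \leq -\frac{2}{27}a_1^3 + \frac{1}{3}a_1a_2 + qa_1 + \frac{2}{27}(a_1^2 - 3a_2 + 9q)^{3/2}$; (d) $-2qa_1 - 2\sqrt{q}\,a_2 - 2q\sqrt{q} \leq a_3 \leq -2qa_1 + 2\sqrt{q}\,a_2 + 2q\sqrt{q}$; where the quantity $a_1^2 - 3a_2 + 9q$ in (c) is a non-negative real number by (b). Moreover, a polynomial $h(x) \in W_q(3)$ has a real root if and only if at least one of the inequalities in (a), (b* ) or (d) is an equality. Explicitly, $h(x)$ lies in $W_q(3)$ and has a real root if and only if there are non-negative integers $k,\ell$ such that exactly one of the following (mutually exclusive) cases occurs: (I) $q$ is not a square and $h(x) = (x^2-q)^2 h_0(x)$ with $h_0(x) \in W_q(1)$; (II) $q$ is a square, $k+\ell = 3$ and $h(x) = (x+\sqrt{q})^{2k}(x-\sqrt{q})^{2\ell}$; (III) $q$ is a square, $k+\ell=2$ and $h(x)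 = (x+\sqrt{q})^{2k}(x-\sqrt{q})^{2\ell}h_0(x)$ with $h_0(x) \in W_q(1)$ having no real roots; (IV) $q$ is a square, $k+\ell = 1$ and $h(x) = (x+\sqrt{q})^{2k}(x-\sqrt{q})^{2\ell}h_0(x)$ with $h_0(x) \in W_q(2)$ having no real roots.
   Context: A $q$-Weil polynomial is a monic polynomial in $\mathbb{Z}[x]$ of even positive degree $2g$ whose set of complex roots has the form $\{w_1,\bar w_1,\ldots,w_g,\bar w_g\}$ with $|w_i| = \sqrt{q}$ for every $i$. $W_q(g)$ denotes the set of $q$-Weil polynomials of degree $2g$. For a positive real $r$, $\sqrt[n]{r} = r^{1/n}$ denotes the positive real $n$-th root (so $(\cdot)^{3/2}$ of a non-negative real is non-negative real). *)

theory Defs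
  imports "HOL-Computational_Algebra.Polynomial" Complex_Main
begin

definition weil_poly :: "nat \<Rightarrow> nat \<Rightarrow> int poly \<Rightarrow> bool" where
  "weil_poly q g P \<longleftrightarrow> g > 0 \<and> degree P = 2 * g \<and> lead_coeff P = 1 \<and>
     (\<exists>w :: nat \<Rightarrow> complex. (\<forall>i<g. cmod (w i) = sqrt (real q)) \<and>
        map_poly complex_of_int P = (\<Prod>i<g. [:- w i, 1:] * [:- cnj (w i), 1:]))"

definition has_real_root :: "int poly \<Rightarrow> bool" where
  "has_real_root P \<longleftrightarrow> (\<exists>x::real. poly (map_poly real_of_int P) x = 0)"

end

(*
  Over the reals, a q-Weil polynomial of degree 2g is a product of g factors
  x^2 - t x + q with |t| <= 2 sqrt q; call the t its traces. For the sextic h the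
  numbers a1, a2 - 3q and a3 - 2q a1 are the coefficients of the monic cubic whose roots
  are the three traces, so h is a q-Weil polynomial iff this cubic has all its roots in
  [-2 sqrt q, 2 sqrt q]. That is the classical criterion: (b) and (c) say that the cubic
  has real critical points and nonnegative discriminant, hence three real roots, while (a),
  (d) and the lower bound on a2 place them in the interval, (d) being the signs of the
  cubic at the endpoints.
  A factor x^2 - t x + q has a real root iff |t| = 2 sqrt q, which gives the criterion for
  real roots. If q = s^2 the factors with t = -2s and t = 2s are (x + s)^2 and (x - s)^2,
  and dividing them off leaves an integral Weil polynomial without real roots. If q is not
  a square, irrationality of sqrt q forces a2 = -q and a3 = -2q a1, i.e. h = (x^2 - q)^2 h0.
*)
theory Submission
  imports Defs
begin

lemma map_poly_of_int_mult:
  "map_poly of_int (p * q) = (map_poly of_int p * map_poly of_int q :: 'a :: comm_ring_1 poly)"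
  by (rule poly_eqI) (simp add: coeff_map_poly coeff_mult)

lemma map_poly_of_int_power:
  "map_poly of_int (p ^ n) = (map_poly of_int p ^ n :: 'a :: comm_ring_1 poly)"
  by (induction n) (simp_all add: map_poly_of_int_mult)

lemma map_poly_of_int_eq_iff:
  "(map_poly of_int p :: 'a :: ring_char_0 poly) = map_poly of_int q \<longleftrightarrow> p = q"
  by (simp add: poly_eq_iff coeff_map_poly)

lemma map_poly_of_real_prod_list:
  "map_poly of_real (prod_list ps) = (prod_list (map (map_poly of_real) ps) :: 'a :: {real_algebra_1, comm_ring_1} poly)"
proof (induction ps)
  case (Cons p ps)
  have "map_poly of_real (p * r) = (map_poly of_real p * map_poly of_real r :: 'a poly)" for r
    by (rule poly_eqI) (simp add: coeff_map_poly coeff_mult)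
  with Cons show ?case by simp
qed simp

lemma map_poly_of_real_eq_iff:
  "(map_poly of_real p :: 'a :: real_algebra_1 poly) = map_poly of_real q \<longleftrightarrow> p = q"
  by (simp add: poly_eq_iff coeff_map_poly)

lemma map_poly_of_int_complex_eq:
  "map_poly complex_of_int P = map_poly of_real (map_poly real_of_int P)"
  by (simp add: map_poly_map_poly o_def)

lemma prod_lessThan_nth: "length xs = n \<Longrightarrow> (\<Prod>i<n. f (xs ! i)) = prod_list (map f xs)"
  by (simp add: prod.list_conv_set_nth atLeast0LessThan)

lemma poly_of_int_synthetic_div:
  fixes p :: "int poly"
  shows "poly (map_poly of_int p) (of_int c :: 'a :: comm_ring_1) = of_int (poly p c)
    \<and> synthetic_div (map_poly of_int p) (of_int c :: 'a) = map_poly of_int (synthetic_div p c)"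
  by (induction p) (simp_all add: map_poly_pCons)

lemma integral_cofactor_linear:
  fixes G :: "'a :: {idom, ring_char_0} poly"
  assumes "map_poly of_int P = [:of_int c, 1:] * G"
  shows "G = map_poly of_int (synthetic_div P (- c))"
proof -
  let ?P = "map_poly of_int P :: 'a poly"
  have "poly ?P (of_int (- c)) = 0" using assms by simp
  then have "[:of_int c, 1:] * synthetic_div ?P (of_int (- c)) = ?P"
    using synthetic_div_correct'[of "of_int (- c)" ?P] by simp
  then have "[:of_int c, 1:] * synthetic_div ?P (of_int (- c)) = [:of_int c, 1:] * G"
    using assms by simp
  then have "synthetic_div ?P (of_int (- c)) = G"
    by (rule mult_left_cancel[THEN iffD1, rotated]) simp
  then show ?thesis
    using poly_of_int_synthetic_div[of P "- c"] by metis
qed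

section \<open>Real factorisation of Weil polynomials\<close>

definition weil_factor :: "real \<Rightarrow> real \<Rightarrow> real poly" where
  "weil_factor Q t = [:Q, - t, 1:]"

definition weil_traces :: "nat \<Rightarrow> real list \<Rightarrow> int poly \<Rightarrow> bool" where
  "weil_traces q ts P \<longleftrightarrow> (\<forall>t\<in>set ts. \<bar>t\<bar> \<le> 2 * sqrt (real q)) \<and>
     map_poly real_of_int P = (\<Prod>t\<leftarrow>ts. weil_factor (real q) t)"

lemma degree_lead_coeff_weil_factors:
  "degree (\<Prod>t\<leftarrow>ts. weil_factor Q t) = 2 * length ts \<and> lead_coeff (\<Prod>t\<leftarrow>ts. weil_factor Q t) = 1"
proof (induction ts)
  case (Cons t ts)
  have "degree (weil_factor Q t) = 2" "lead_coeff (weil_factor Q t) = 1"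
    by (simp_all add: weil_factor_def)
  moreover from this Cons.IH have "weil_factor Q t \<noteq> 0" "(\<Prod>t\<leftarrow>ts. weil_factor Q t) \<noteq> 0"
    by auto
  ultimately show ?case
    using Cons.IH unfolding list.map prod_list.Cons lead_coeff_mult by (auto simp: degree_mult_eq)
qed simp

lemma cnj_factors_eq_weil_factor:
  "[:- w, 1:] * [:- cnj w, 1:] = map_poly of_real (weil_factor (cmod w ^ 2) (2 * Re w))"
proof -
  have "w * cnj w = of_real (cmod w ^ 2)" "w + cnj w = of_real (2 * Re w)"
    by (rule complex_norm_square[symmetric], rule complex_add_cnj)
  moreover have "[:- w, 1:] * [:- cnj w, 1:] = [:w * cnj w, - (w + cnj w), 1:]"
    by (simp add: algebra_simps)
  ultimately show ?thesis
    by (simp add: weil_factor_def map_poly_pCons)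
qed

lemma prod_cnj_factors_eq_weil_factors:
  assumes "length ts = g" and "\<And>i. i < g \<Longrightarrow> cmod (w i) = sqrt (real q) \<and> 2 * Re (w i) = ts ! i"
  shows "(\<Prod>i<g. [:- w i, 1:] * [:- cnj (w i), 1:]) = map_poly of_real (\<Prod>t\<leftarrow>ts. weil_factor (real q) t)"
proof -
  have "(\<Prod>i<g. [:- w i, 1:] * [:- cnj (w i), 1:])
      = (\<Prod>i<g. map_poly of_real (weil_factor (real q) (ts ! i)))"
    using assms(2) by (intro prod.cong refl) (subst cnj_factors_eq_weil_factor, simp)
  also have "\<dots> = map_poly of_real (\<Prod>t\<leftarrow>ts. weil_factor (real q) t)"
    unfolding map_poly_of_real_prod_list map_map o_def using assms(1) by (rule prod_lessThan_nth)
  finally show ?thesis .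
qed

lemma weil_poly_imp_weil_traces:
  assumes "weil_poly q g P"
  shows "\<exists>ts. length ts = g \<and> weil_traces q ts P"
proof -
  obtain w where w: "\<forall>i<g. cmod (w i) = sqrt (real q)"
    and P: "map_poly complex_of_int P = (\<Prod>i<g. [:- w i, 1:] * [:- cnj (w i), 1:])"
    using assms unfolding weil_poly_def by blast
  define ts where "ts = map (\<lambda>i. 2 * Re (w i)) [0..<g]"
  have ts: "length ts = g" "\<And>i. i < g \<Longrightarrow> cmod (w i) = sqrt (real q) \<and> 2 * Re (w i) = ts ! i"
    by (simp_all add: ts_def w)
  have "map_poly of_real (map_poly real_of_int P)
      = (map_poly of_real (\<Prod>t\<leftarrow>ts. weil_factor (real q) t) :: complex poly)"
    using P prod_cnj_factors_eq_weil_factors[OF ts] by (simp only: map_poly_of_int_complex_eq)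
  then have "map_poly real_of_int P = (\<Prod>t\<leftarrow>ts. weil_factor (real q) t)"
    by (simp only: map_poly_of_real_eq_iff)
  moreover have "\<bar>2 * Re (w i)\<bar> \<le> 2 * sqrt (real q)" if "i < g" for i
    using abs_Re_le_cmod[of "w i"] w that by simp
  then have "\<forall>t\<in>set ts. \<bar>t\<bar> \<le> 2 * sqrt (real q)"
    by (auto simp: ts_def)
  ultimately show ?thesis
    using ts(1) unfolding weil_traces_def by blast
qed

lemma weil_traces_imp_weil_poly:
  assumes "weil_traces q ts P" and "length ts = g" and "g > 0"
  shows "weil_poly q g P"
proof -
  have ts: "\<forall>t\<in>set ts. \<bar>t\<bar> \<le> 2 * sqrt (real q)"
    and P: "map_poly real_of_int P = (\<Prod>t\<leftarrow>ts. weil_factor (real q) t)"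
    using assms(1) unfolding weil_traces_def by blast+
  define w where "w i = Complex (ts ! i / 2) (sqrt (real q - (ts ! i / 2)\<^sup>2))" for i
  have w: "cmod (w i) = sqrt (real q) \<and> 2 * Re (w i) = ts ! i" if "i < g" for i
  proof -
    have "\<bar>ts ! i / 2\<bar> \<le> sqrt (real q)" using ts that assms(2) nth_mem by fastforce
    then have "(ts ! i / 2)\<^sup>2 \<le> real q"
      by (metis abs_le_square_iff abs_of_nonneg of_nat_0_le_iff real_sqrt_ge_zero real_sqrt_pow2)
    then show ?thesis by (simp add: w_def cmod_def)
  qed
  have degree: "degree (map_poly real_of_int P) = degree P"
    by (rule degree_map_poly) simp
  have "map_poly complex_of_int P = (\<Prod>i<g. [:- w i, 1:] * [:- cnj (w i), 1:])"
    unfolding map_poly_of_int_complex_eq P by (rule prod_cnj_factors_eq_weil_factors[OF assms(2) w, symmetric])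
  moreover have "degree P = 2 * g"
    using P degree degree_lead_coeff_weil_factors[of "real q" ts] assms(2) by simp
  moreover have "real_of_int (lead_coeff P) = lead_coeff (map_poly real_of_int P)"
    by (simp add: coeff_map_poly degree)
  then have "lead_coeff P = 1"
    by (metis P degree_lead_coeff_weil_factors of_int_eq_1_iff)
  ultimately show ?thesis
    unfolding weil_poly_def using assms(3) w by blast
qed

lemma weil_poly_iff_weil_traces:
  "weil_poly q g P \<longleftrightarrow> g > 0 \<and> (\<exists>ts. length ts = g \<and> weil_traces q ts P)"
  using weil_poly_imp_weil_traces weil_traces_imp_weil_poly weil_poly_def by blast

lemma weil_traces_Nil: "weil_traces q [] 1"
  by (simp add: weil_traces_def)

lemma weil_traces_append:
  "weil_traces q ts P \<Longrightarrow> weil_traces q us Q \<Longrightarrow> weil_traces q (ts @ us) (P * Q)"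
  by (auto simp: weil_traces_def map_poly_of_int_mult)

lemma weil_traces_replicate:
  "weil_traces q [t] P \<Longrightarrow> weil_traces q (replicate n t) (P ^ n)"
  by (induction n) (auto simp: weil_traces_def map_poly_of_int_mult)

lemma weil_traces_linear_square:
  assumes "int q = c\<^sup>2"
  shows "weil_traces q [- 2 * of_int c] ([:c, 1:]\<^sup>2)"
proof -
  have "real q = (of_int c)\<^sup>2" using assms by (metis of_int_of_nat_eq of_int_power)
  then have "sqrt (real q) = \<bar>of_int c\<bar>" by simp
  with \<open>real q = (of_int c)\<^sup>2\<close> show ?thesis
    by (simp add: weil_traces_def weil_factor_def map_poly_pCons power2_eq_square)
qed

lemma weil_factor_root_iff:
  assumes "0 \<le> Q" "\<bar>t\<bar> \<le> 2 * sqrt Q"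
  shows "(\<exists>u. poly (weil_factor Q t) u = 0) \<longleftrightarrow> \<bar>t\<bar> = 2 * sqrt Q"
proof -
  have square: "poly (weil_factor Q t) u = (u - t / 2)\<^sup>2 + (Q - (t / 2)\<^sup>2)" for u
    by (simp add: weil_factor_def algebra_simps power2_eq_square)
  have "(t / 2)\<^sup>2 \<le> Q"
    using assms by (metis abs_div_pos abs_le_square_iff abs_of_nonneg divide_le_eq
        mult.commute real_sqrt_ge_zero real_sqrt_pow2 zero_less_numeral)
  then have "(\<exists>u. poly (weil_factor Q t) u = 0) \<longleftrightarrow> (t / 2)\<^sup>2 = Q"
    unfolding square by (smt (verit) zero_le_power2 power_zero_numeral)
  also have "\<dots> \<longleftrightarrow> \<bar>t / 2\<bar> = sqrt Q"
    using assms(1) by (metis real_sqrt_abs power2_abs real_sqrt_pow2)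
  also have "\<dots> \<longleftrightarrow> \<bar>t\<bar> = 2 * sqrt Q"
    by auto
  finally show ?thesis .
qed

lemma weil_traces_real_root_iff:
  assumes "weil_traces q ts P"
  shows "has_real_root P \<longleftrightarrow> (\<exists>t\<in>set ts. \<bar>t\<bar> = 2 * sqrt (real q))"
proof -
  have "poly (\<Prod>t\<leftarrow>ts. weil_factor (real q) t) u = (\<Prod>t\<leftarrow>ts. poly (weil_factor (real q) t) u)" for u
    by (induction ts) simp_all
  then have "has_real_root P \<longleftrightarrow> (\<exists>t\<in>set ts. \<exists>u. poly (weil_factor (real q) t) u = 0)"
    using assms by (simp add: has_real_root_def weil_traces_def prod_list_zero_iff image_iff) blast
  then show ?thesis
    using assms weil_factor_root_iff[of "real q"] by (auto simp: weil_traces_def)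
qed

section \<open>Splitting off the real roots\<close>

text \<open>A trace \<open>\<plusminus>2s\<close> contributes the integral factor \<open>(x \<mp> s)\<^sup>2\<close>, and synthetic
  division by it keeps the cofactor integral.\<close>

lemma weil_traces_remove_boundary:
  assumes q: "q = s\<^sup>2" and P: "weil_traces q (xs @ t # ys) P" and t: "\<bar>t\<bar> = 2 * sqrt (real q)"
  shows "\<exists>P1. weil_traces q (xs @ ys) P1 \<and> (P = [:int s, 1:]\<^sup>2 * P1 \<or> P = [:- int s, 1:]\<^sup>2 * P1)"
proof -
  obtain c where c: "c = int s \<or> c = - int s" and tc: "t = - 2 * of_int c"
    using t q by (cases "t \<ge> 0") (auto intro: that[of "- int s"] that[of "int s"])
  have "real q = of_int c * of_int c" using c q by (auto simp: power2_eq_square)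
  then have "weil_factor (real q) t = [:of_int c, 1:] * [:of_int c, 1:]"
    by (simp add: weil_factor_def tc)
  moreover have "(\<Prod>u\<leftarrow>xs @ t # ys. weil_factor (real q) u)
      = weil_factor (real q) t * (\<Prod>u\<leftarrow>xs @ ys. weil_factor (real q) u)"
    by (simp add: mult_ac)
  ultimately have "map_poly real_of_int P
      = [:of_int c, 1:] * ([:of_int c, 1:] * (\<Prod>u\<leftarrow>xs @ ys. weil_factor (real q) u))"
    using P unfolding weil_traces_def by (metis mult.assoc)
  then obtain P2 where "[:of_int c, 1:] * (\<Prod>u\<leftarrow>xs @ ys. weil_factor (real q) u) = map_poly real_of_int P2"
    using integral_cofactor_linear by metis
  then obtain P1 where P1: "(\<Prod>u\<leftarrow>xs @ ys. weil_factor (real q) u) = map_poly real_of_int P1"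
    using integral_cofactor_linear by metis
  have "map_poly real_of_int [:c, 1:] = [:of_int c, 1:]"
    by (simp add: map_poly_pCons)
  then have "map_poly real_of_int ([:c, 1:]\<^sup>2 * P1)
      = [:of_int c, 1:] * ([:of_int c, 1:] * (\<Prod>u\<leftarrow>xs @ ys. weil_factor (real q) u))"
    unfolding map_poly_of_int_mult map_poly_of_int_power power2_eq_square P1 by (simp only: mult.assoc)
  also have "\<dots> = map_poly real_of_int P"
    using \<open>map_poly real_of_int P = _\<close> by simp
  finally have "map_poly real_of_int P = map_poly real_of_int ([:c, 1:]\<^sup>2 * P1)" ..
  then have "P = [:c, 1:]\<^sup>2 * P1"
    by (simp only: map_poly_of_int_eq_iff)
  moreover have "weil_traces q (xs @ ys) P1"
    using P P1 by (simp add: weil_traces_def)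
  ultimately show ?thesis using c by blast
qed

lemma weil_traces_square_split:
  assumes "q = s\<^sup>2" and "weil_traces q ts P"
  shows "\<exists>k l us P0. P = [:int s, 1:] ^ (2 * k) * [:- int s, 1:] ^ (2 * l) * P0 \<and>
    k + l + length us = length ts \<and> weil_traces q us P0 \<and> \<not> has_real_root P0"
  using assms(2)
proof (induction "length ts" arbitrary: ts P rule: less_induct)
  case less
  show ?case
  proof (cases "\<exists>t\<in>set ts. \<bar>t\<bar> = 2 * sqrt (real q)")
    case False
    then show ?thesis
      using less.prems weil_traces_real_root_iff by (intro exI[of _ 0] exI[of _ ts] exI[of _ P]) auto
  next
    case True
    then obtain xs t ys where ts: "ts = xs @ t # ys" and "\<bar>t\<bar> = 2 * sqrt (real q)"
      by (metis split_list)
    then obtain P1 where P1: "weil_traces q (xs @ ys) P1"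
      and P: "P = [:int s, 1:]\<^sup>2 * P1 \<or> P = [:- int s, 1:]\<^sup>2 * P1"
      using weil_traces_remove_boundary[OF assms(1)] less.prems by blast
    obtain k l us P0 where P1_split: "P1 = [:int s, 1:] ^ (2 * k) * [:- int s, 1:] ^ (2 * l) * P0"
      and len: "k + l + length us = length (xs @ ys)" and P0: "weil_traces q us P0" "\<not> has_real_root P0"
      using less.hyps[OF _ P1] ts by auto
    have square_power: "a ^ (2 * Suc n) = a\<^sup>2 * a ^ (2 * n)" for a :: "int poly" and n
      by (metis mult_Suc_right power_add)
    have len_ts: "Suc k + l + length us = length ts" "k + Suc l + length us = length ts"
      using len ts by simp_all
    from P show ?thesis
    proof
      assume "P = [:int s, 1:]\<^sup>2 * P1"
      then have "P = [:int s, 1:] ^ (2 * Suc k) * [:- int s, 1:] ^ (2 * l) * P0"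
        by (simp only: P1_split square_power mult.assoc)
      then show ?thesis using P0 len_ts by blast
    next
      assume "P = [:- int s, 1:]\<^sup>2 * P1"
      then have "P = [:int s, 1:] ^ (2 * k) * [:- int s, 1:] ^ (2 * Suc l) * P0"
        by (simp only: P1_split square_power mult.assoc mult.left_commute)
      then show ?thesis using P0 len_ts by blast
    qed
  qed
qed

lemma weil_traces_square_factors:
  assumes "q = s\<^sup>2" and "weil_traces q us P0"
  shows "weil_traces q (replicate k (- 2 * real s) @ replicate l (2 * real s) @ us)
    ([:int s, 1:] ^ (2 * k) * [:- int s, 1:] ^ (2 * l) * P0)"
proof -
  have "int q = (int s)\<^sup>2" "int q = (- int s)\<^sup>2"
    using assms(1) by simp_all
  from this[THEN weil_traces_linear_square] have
    "weil_traces q (replicate k (- 2 * real s)) (([:int s, 1:]\<^sup>2) ^ k)"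
    "weil_traces q (replicate l (2 * real s)) (([:- int s, 1:]\<^sup>2) ^ l)"
    by (auto intro: weil_traces_replicate)
  then show ?thesis
    using assms(2) by (simp add: weil_traces_append power_mult mult.assoc)
qed

lemma weil_poly_square_factors:
  assumes "q = s\<^sup>2" and "weil_traces q us P0" and "k + l + length us = g" and "0 < k + l"
  shows "weil_poly q g ([:int s, 1:] ^ (2 * k) * [:- int s, 1:] ^ (2 * l) * P0) \<and>
    has_real_root ([:int s, 1:] ^ (2 * k) * [:- int s, 1:] ^ (2 * l) * P0)"
proof -
  let ?ts = "replicate k (- 2 * real s) @ replicate l (2 * real s) @ us"
  have traces: "weil_traces q ?ts ([:int s, 1:] ^ (2 * k) * [:- int s, 1:] ^ (2 * l) * P0)"
    using assms(1,2) by (rule weil_traces_square_factors)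
  have "\<exists>t\<in>set ?ts. \<bar>t\<bar> = 2 * sqrt (real q)"
    using assms(1,4) by (cases "k = 0") auto
  then have "has_real_root ([:int s, 1:] ^ (2 * k) * [:- int s, 1:] ^ (2 * l) * P0)"
    using weil_traces_real_root_iff[OF traces] by blast
  moreover have "weil_poly q g ([:int s, 1:] ^ (2 * k) * [:- int s, 1:] ^ (2 * l) * P0)"
    unfolding weil_poly_iff_weil_traces using traces assms(3,4) by (intro conjI exI[of _ ?ts]) auto
  ultimately show ?thesis by blast
qed

lemma weil_poly_real_root_square:
  assumes "q = s\<^sup>2" and "weil_poly q g h" and "has_real_root h"
  shows "\<exists>k l us h0. h = [:int s, 1:] ^ (2 * k) * [:- int s, 1:] ^ (2 * l) * h0 \<and>
    k + l + length us = g \<and> 0 < k + l \<and> weil_traces q us h0 \<and> \<not> has_real_root h0"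
proof -
  obtain ts where "length ts = g" "weil_traces q ts h"
    using assms(2) weil_poly_iff_weil_traces by blast
  then obtain k l us h0 where h: "h = [:int s, 1:] ^ (2 * k) * [:- int s, 1:] ^ (2 * l) * h0"
    and "k + l + length us = g" "weil_traces q us h0" "\<not> has_real_root h0"
    using weil_traces_square_split[OF assms(1)] by metis
  moreover have "0 < k + l"
    using h assms(3) \<open>\<not> has_real_root h0\<close> by (cases "k + l = 0") auto
  ultimately show ?thesis by blast
qed

lemma weil_poly_difference_of_squares_factor:
  assumes "weil_poly q 1 h0"
  shows "weil_poly q 3 ([: - int q, 0, 1 :]\<^sup>2 * h0) \<and> has_real_root ([: - int q, 0, 1 :]\<^sup>2 * h0)"
proof -
  let ?r = "sqrt (real q)"
  obtain t where h0: "weil_traces q [t] h0"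
    using assms by (auto simp: weil_poly_iff_weil_traces length_Suc_conv)
  have "map_poly real_of_int ([: - int q, 0, 1 :]\<^sup>2) = weil_factor (real q) (2 * ?r) * weil_factor (real q) (- 2 * ?r)"
    by (simp add: weil_factor_def map_poly_pCons power2_eq_square algebra_simps)
  then have "weil_traces q [2 * ?r, - 2 * ?r] ([: - int q, 0, 1 :]\<^sup>2)"
    by (simp add: weil_traces_def)
  from weil_traces_append[OF this h0]
  have traces: "weil_traces q [2 * ?r, - 2 * ?r, t] ([: - int q, 0, 1 :]\<^sup>2 * h0)"
    by simp
  then have "weil_poly q 3 ([: - int q, 0, 1 :]\<^sup>2 * h0)"
    unfolding weil_poly_iff_weil_traces by (intro conjI exI[of _ "[2 * ?r, - 2 * ?r, t]"]) auto
  moreover have "has_real_root ([: - int q, 0, 1 :]\<^sup>2 * h0)"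
    using weil_traces_real_root_iff[OF traces] by simp
  ultimately show ?thesis by blast
qed

section \<open>Monic real cubics with all roots in an interval\<close>

lemma cubic_eq_prod_roots:
  fixes A B C x y z u :: real
  assumes "A = - (x + y + z)" "B = x * y + x * z + y * z" "C = - (x * y * z)"
  shows "u ^ 3 + A * u\<^sup>2 + B * u + C = (u - x) * (u - y) * (u - z)"
  unfolding assms by (simp add: algebra_simps power2_eq_square power3_eq_cube)

lemma powr_three_halves: "0 \<le> x \<Longrightarrow> x powr (3/2) = sqrt x ^ 3"
  for x :: real
proof (cases "x = 0")
  case False
  assume "0 \<le> x"
  then have "sqrt x ^ 3 = (x powr (1/2)) ^ 3" by (simp add: powr_half_sqrt)
  also have "\<dots> = x powr (real 3 * (1/2))" using False by (rule powr_power)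
  finally show ?thesis by simp
qed simp

lemma cubic_roots_in_interval_conditions:
  fixes A B C R x y z :: real
  assumes roots: "\<bar>x\<bar> \<le> R" "\<bar>y\<bar> \<le> R" "\<bar>z\<bar> \<le> R"
    and vieta: "A = - (x + y + z)" "B = x * y + x * z + y * z" "C = - (x * y * z)"
  shows "\<bar>A\<bar> \<le> 3 * R \<and> 2 * R * \<bar>A\<bar> - 3 * R\<^sup>2 \<le> B \<and> B \<le> A\<^sup>2 / 3 \<and>
    \<bar>27 * C + 2 * A ^ 3 - 9 * A * B\<bar> \<le> 2 * (A\<^sup>2 - 3 * B) powr (3/2) \<and>
    A * R\<^sup>2 - R ^ 3 - B * R + C \<le> 0 \<and> 0 \<le> R ^ 3 + A * R\<^sup>2 + B * R + C"
proof -
  have le: "0 \<le> R - x" "0 \<le> R - y" "0 \<le> R - z" and ge: "0 \<le> R + x" "0 \<le> R + y" "0 \<le> R + z"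
    using roots by (simp_all add: abs_le_iff)
  have "0 \<le> (R - x) * (R - y) + (R - x) * (R - z) + (R - y) * (R - z)"
    "0 \<le> (R + x) * (R + y) + (R + x) * (R + z) + (R + y) * (R + z)"
    using le ge by (simp_all add: add_nonneg_nonneg)
  moreover have "(R - x) * (R - y) + (R - x) * (R - z) + (R - y) * (R - z) = 3 * R\<^sup>2 + 2 * R * A + B"
    "(R + x) * (R + y) + (R + x) * (R + z) + (R + y) * (R + z) = 3 * R\<^sup>2 - 2 * R * A + B"
    unfolding vieta by (simp_all add: algebra_simps power2_eq_square)
  moreover have "\<bar>2 * R * A\<bar> = 2 * R * \<bar>A\<bar>"
    using le ge by (simp add: abs_mult)
  ultimately have B_lower: "2 * R * \<bar>A\<bar> - 3 * R\<^sup>2 \<le> B"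
    by (smt (verit))
  define X where "X = A\<^sup>2 - 3 * B"
  have "2 * X = (x - y)\<^sup>2 + (x - z)\<^sup>2 + (y - z)\<^sup>2"
    unfolding X_def vieta by (simp add: algebra_simps power2_eq_square)
  then have "0 \<le> X" by (smt (verit) zero_le_power2)
  have "4 * X ^ 3 - (27 * C + 2 * A ^ 3 - 9 * A * B)\<^sup>2 = 27 * ((x - y) * (x - z) * (y - z))\<^sup>2"
    unfolding X_def vieta by (simp add: algebra_simps power2_eq_square power3_eq_cube)
  moreover have "(2 * sqrt X ^ 3)\<^sup>2 = 4 * X ^ 3"
  proof -
    have "sqrt X ^ 6 = (sqrt X ^ 2) ^ 3" by (simp flip: power_mult)
    then show ?thesis using \<open>0 \<le> X\<close> by (simp add: power_mult_distrib)
  qed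
  ultimately have "(27 * C + 2 * A ^ 3 - 9 * A * B)\<^sup>2 \<le> (2 * sqrt X ^ 3)\<^sup>2"
    by (smt (verit) zero_le_power2)
  moreover have "0 \<le> 2 * sqrt X ^ 3" using \<open>0 \<le> X\<close> by simp
  ultimately have "\<bar>27 * C + 2 * A ^ 3 - 9 * A * B\<bar> \<le> 2 * sqrt X ^ 3"
    using power2_le_iff_abs_le by blast
  then have discriminant: "\<bar>27 * C + 2 * A ^ 3 - 9 * A * B\<bar> \<le> 2 * X powr (3/2)"
    using \<open>0 \<le> X\<close> by (simp add: powr_three_halves)
  have "R ^ 3 + A * R\<^sup>2 + B * R + C = (R - x) * (R - y) * (R - z)"
    "A * R\<^sup>2 - R ^ 3 - B * R + C = - ((R + x) * (R + y) * (R + z))"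
    unfolding vieta by (simp_all add: algebra_simps power2_eq_square power3_eq_cube)
  then have "A * R\<^sup>2 - R ^ 3 - B * R + C \<le> 0 \<and> 0 \<le> R ^ 3 + A * R\<^sup>2 + B * R + C"
    using le ge by simp
  moreover have "\<bar>A\<bar> \<le> 3 * R" using roots unfolding vieta by linarith
  moreover have "B \<le> A\<^sup>2 / 3" using \<open>0 \<le> X\<close> unfolding X_def by simp
  ultimately show ?thesis
    using B_lower discriminant unfolding X_def by blast
qed

lemma cubic_vieta_of_two_roots:
  fixes A B C r s :: real
  assumes "r ^ 3 + A * r\<^sup>2 + B * r + C = 0" "s ^ 3 + A * s\<^sup>2 + B * s + C = 0" "r \<noteq> s"
  defines "m \<equiv> - A - r - s"
  shows "B = r * m + r * s + m * s \<and> C = - (r * m * s)"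
proof -
  have "(r - s) * (r\<^sup>2 + r * s + s\<^sup>2 + A * (r + s) + B)
      = (r ^ 3 + A * r\<^sup>2 + B * r + C) - (s ^ 3 + A * s\<^sup>2 + B * s + C)"
    by (simp add: algebra_simps power2_eq_square power3_eq_cube)
  then have "r\<^sup>2 + r * s + s\<^sup>2 + A * (r + s) + B = 0"
    using assms(1-3) by simp
  moreover have "r * m + r * s + m * s - B = - (r\<^sup>2 + r * s + s\<^sup>2 + A * (r + s) + B)"
    unfolding m_def by (simp add: algebra_simps power2_eq_square)
  ultimately have B: "B = r * m + r * s + m * s"
    by simp
  have A: "A = - (r + m + s)"
    by (simp add: m_def)
  have "r ^ 3 + A * r\<^sup>2 + B * r + C = C + r * m * s"
    unfolding A B by (simp add: algebra_simps power2_eq_square power3_eq_cube)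
  then have "C = - (r * m * s)"
    using assms(1) by linarith
  with B show ?thesis ..
qed

lemma cubic_middle_root_between:
  fixes A B c1 c2 r m s :: real
  assumes derivative: "\<And>u. 3 * (u - c1) * (u - c2) = 3 * u\<^sup>2 + 2 * A * u + B"
    and vieta: "A = - (r + m + s)" "B = r * m + r * s + m * s"
    and order: "r \<le> c1" "c1 \<le> c2" "c2 \<le> s" "r < s"
  shows "r \<le> m \<and> m \<le> s"
proof -
  have "(r - m) * (r - s) = 3 * r\<^sup>2 + 2 * A * r + B" "(s - r) * (s - m) = 3 * s\<^sup>2 + 2 * A * s + B"
    unfolding vieta by (simp_all add: algebra_simps power2_eq_square)
  then have outer: "(r - m) * (r - s) = 3 * ((r - c1) * (r - c2))" "(s - r) * (s - m) = 3 * ((s - c1) * (s - c2))"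
    using derivative[of r] derivative[of s] by (simp_all only: mult.assoc)
  have nonneg: "0 \<le> (r - c1) * (r - c2)" "0 \<le> (s - c1) * (s - c2)"
    using order by (simp_all add: mult_nonpos_nonpos)
  have "r \<le> m"
  proof (rule ccontr)
    assume "\<not> r \<le> m"
    then have "(r - m) * (r - s) < 0" using order by (simp add: mult_pos_neg)
    with outer(1) nonneg(1) show False by linarith
  qed
  moreover have "m \<le> s"
  proof (rule ccontr)
    assume "\<not> m \<le> s"
    then have "(s - r) * (s - m) < 0" using order by (simp add: mult_pos_neg)
    with outer(2) nonneg(2) show False by linarith
  qed
  ultimately show ?thesis ..
qed

text \<open>\<open>c1 \<le> c2\<close> are the critical points of the cubic; 27 times its values there are
  \<open>27 C + 2 A\<^sup>3 - 9 A B \<plusminus> 2 D\<^sup>3\<close> with \<open>D = \<surd>(A\<^sup>2 - 3 B)\<close>.\<close>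

lemma cubic_critical_points_in_interval:
  fixes A B C R :: real
  assumes "\<bar>A\<bar> \<le> 3 * R" "2 * R * \<bar>A\<bar> - 3 * R\<^sup>2 \<le> B" "B \<le> A\<^sup>2 / 3"
    and "\<bar>27 * C + 2 * A ^ 3 - 9 * A * B\<bar> \<le> 2 * (A\<^sup>2 - 3 * B) powr (3/2)"
  shows "\<exists>c1 c2. - R \<le> c1 \<and> c1 \<le> c2 \<and> c2 \<le> R \<and>
    c2 ^ 3 + A * c2\<^sup>2 + B * c2 + C \<le> 0 \<and> 0 \<le> c1 ^ 3 + A * c1\<^sup>2 + B * c1 + C \<and>
    (\<forall>u. 3 * (u - c1) * (u - c2) = 3 * u\<^sup>2 + 2 * A * u + B)"
proof -
  define g where "g u = u ^ 3 + A * u\<^sup>2 + B * u + C" for u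
  define D where "D = sqrt (A\<^sup>2 - 3 * B)"
  define c1 c2 where "c1 = (- A - D) / 3" and "c2 = (- A + D) / 3"
  have "0 \<le> D" and DD: "D\<^sup>2 = A\<^sup>2 - 3 * B"
    using assms(3) by (simp_all add: D_def)
  have "27 * g c1 = (27 * C + 2 * A ^ 3 - 9 * A * B) + 2 * D ^ 3 + 3 * D * (A\<^sup>2 - 3 * B - D\<^sup>2)"
    "27 * g c2 = (27 * C + 2 * A ^ 3 - 9 * A * B) - 2 * D ^ 3 - 3 * D * (A\<^sup>2 - 3 * B - D\<^sup>2)"
    unfolding g_def c1_def c2_def by (simp_all add: field_simps power2_eq_square power3_eq_cube)
  moreover have "\<bar>27 * C + 2 * A ^ 3 - 9 * A * B\<bar> \<le> 2 * D ^ 3"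
    using assms(3,4) by (simp add: D_def powr_three_halves)
  ultimately have "g c2 \<le> 0" "0 \<le> g c1"
    using DD by (simp_all add: abs_le_iff)
  have "D\<^sup>2 \<le> (3 * R - \<bar>A\<bar>)\<^sup>2"
    using assms(2) DD by (simp add: power2_eq_square algebra_simps)
  then have "D \<le> 3 * R - \<bar>A\<bar>"
    using assms(1) \<open>0 \<le> D\<close> by (simp add: abs_le_square_iff power2_le_iff_abs_le)
  then have "- R \<le> c1" "c1 \<le> c2" "c2 \<le> R"
    using \<open>0 \<le> D\<close> by (auto simp: c1_def c2_def abs_le_iff)
  moreover have "3 * (u - c1) * (u - c2) = 3 * u\<^sup>2 + 2 * A * u + B" for u
  proof -
    have "3 * (u - c1) * (u - c2) = 3 * u\<^sup>2 + 2 * A * u + B + (A\<^sup>2 - 3 * B - D\<^sup>2) / 3"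
      unfolding c1_def c2_def by (simp add: field_simps power2_eq_square)
    then show ?thesis using DD by simp
  qed
  ultimately show ?thesis
    using \<open>g c2 \<le> 0\<close> \<open>0 \<le> g c1\<close> unfolding g_def by blast
qed

text \<open>The intermediate value theorem gives roots in \<open>[-R, c1]\<close> and \<open>[c2, R]\<close>; the third
  root lies between them because the derivative is nonnegative outside \<open>[c1, c2]\<close>.\<close>

lemma cubic_roots_in_interval_exist:
  fixes A B C R :: real
  assumes "\<bar>A\<bar> \<le> 3 * R" "2 * R * \<bar>A\<bar> - 3 * R\<^sup>2 \<le> B" "B \<le> A\<^sup>2 / 3"
    and "\<bar>27 * C + 2 * A ^ 3 - 9 * A * B\<bar> \<le> 2 * (A\<^sup>2 - 3 * B) powr (3/2)"
    and "A * R\<^sup>2 - R ^ 3 - B * R + C \<le> 0" "0 \<le> R ^ 3 + A * R\<^sup>2 + B * R + C"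
  shows "\<exists>x y z. \<bar>x\<bar> \<le> R \<and> \<bar>y\<bar> \<le> R \<and> \<bar>z\<bar> \<le> R \<and>
    A = - (x + y + z) \<and> B = x * y + x * z + y * z \<and> C = - (x * y * z)"
proof -
  define g where "g u = u ^ 3 + A * u\<^sup>2 + B * u + C" for u
  obtain c1 c2 where c: "- R \<le> c1" "c1 \<le> c2" "c2 \<le> R" "g c2 \<le> 0" "0 \<le> g c1"
    and derivative: "\<And>u. 3 * (u - c1) * (u - c2) = 3 * u\<^sup>2 + 2 * A * u + B"
    using cubic_critical_points_in_interval[OF assms(1-4)] unfolding g_def by blast
  have "g (- R) \<le> 0" "0 \<le> g R"
    using assms(5,6) by (simp_all add: g_def)
  moreover have "continuous_on S g" for S
    unfolding g_def by (intro continuous_intros)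
  ultimately obtain r s where r: "- R \<le> r" "r \<le> c1" "g r = 0" and s: "c2 \<le> s" "s \<le> R" "g s = 0"
    using IVT'[of g "- R" 0 c1] IVT'[of g c2 0 R] c by blast
  show ?thesis
  proof (cases "r = s")
    case True
    then have "c1 = r" "c2 = r" using r s c(2) by auto
    then have "A = - 3 * r" "B = 3 * r\<^sup>2"
      using derivative[of 0] derivative[of 1] derivative[of "- 1"] by (simp_all add: power2_eq_square algebra_simps)
    moreover from this have "C = - (r ^ 3)"
      using r(3) by (simp add: g_def power2_eq_square power3_eq_cube)
    ultimately show ?thesis
      using r s True by (intro exI[of _ r]) (simp add: power2_eq_square power3_eq_cube)
  next
    case False
    define m where "m = - A - r - s"
    have "B = r * m + r * s + m * s" "C = - (r * m * s)"
      using cubic_vieta_of_two_roots[of r A B C s] r s False by (simp_all add: g_def m_def)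
    moreover have "A = - (r + m + s)" by (simp add: m_def)
    moreover from calculation have "r \<le> m \<and> m \<le> s"
      using cubic_middle_root_between[OF derivative] r s c(2) False by simp
    ultimately show ?thesis
      using r s by (intro exI[of _ r] exI[of _ m] exI[of _ s]) (auto simp: abs_le_iff)
  qed
qed

lemma cubic_root_on_boundary_iff:
  fixes A B C R x y z :: real
  assumes roots: "\<bar>x\<bar> \<le> R" "\<bar>y\<bar> \<le> R" "\<bar>z\<bar> \<le> R"
    and vieta: "A = - (x + y + z)" "B = x * y + x * z + y * z" "C = - (x * y * z)"
  shows "(\<bar>x\<bar> = R \<or> \<bar>y\<bar> = R \<or> \<bar>z\<bar> = R) \<longleftrightarrow>
    \<bar>A\<bar> = 3 * R \<or> B = 2 * R * \<bar>A\<bar> - 3 * R\<^sup>2 \<or>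
    A * R\<^sup>2 - R ^ 3 - B * R + C = 0 \<or> R ^ 3 + A * R\<^sup>2 + B * R + C = 0"
proof -
  have le: "0 \<le> R - x" "0 \<le> R - y" "0 \<le> R - z" and ge: "0 \<le> R + x" "0 \<le> R + y" "0 \<le> R + z"
    using roots by (simp_all add: abs_le_iff)
  have "R ^ 3 + A * R\<^sup>2 + B * R + C = (R - x) * (R - y) * (R - z)"
    "A * R\<^sup>2 - R ^ 3 - B * R + C = - ((R + x) * (R + y) * (R + z))"
    unfolding vieta by (simp_all add: algebra_simps power2_eq_square power3_eq_cube)
  then have boundary_iff: "(\<bar>x\<bar> = R \<or> \<bar>y\<bar> = R \<or> \<bar>z\<bar> = R) \<longleftrightarrow>
      A * R\<^sup>2 - R ^ 3 - B * R + C = 0 \<or> R ^ 3 + A * R\<^sup>2 + B * R + C = 0"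
    using le ge by (auto simp: abs_if)
  have "\<bar>x\<bar> = R" if "\<bar>A\<bar> = 3 * R"
    using that roots unfolding vieta by (auto simp: abs_if split: if_splits)
  moreover have "\<bar>x\<bar> = R \<or> \<bar>y\<bar> = R \<or> \<bar>z\<bar> = R" if B: "B = 2 * R * \<bar>A\<bar> - 3 * R\<^sup>2"
  proof -
    have "(R - x) * (R - y) + (R - x) * (R - z) + (R - y) * (R - z) = 3 * R\<^sup>2 + 2 * R * A + B"
      "(R + x) * (R + y) + (R + x) * (R + z) + (R + y) * (R + z) = 3 * R\<^sup>2 - 2 * R * A + B"
      unfolding vieta by (simp_all add: algebra_simps power2_eq_square)
    moreover have "0 \<le> (R - x) * (R - y)" "0 \<le> (R - x) * (R - z)" "0 \<le> (R - y) * (R - z)"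
      "0 \<le> (R + x) * (R + y)" "0 \<le> (R + x) * (R + z)" "0 \<le> (R + y) * (R + z)"
      using le ge by simp_all
    moreover have "\<bar>2 * R * A\<bar> = 2 * R * \<bar>A\<bar>"
      using le ge by (simp add: abs_mult)
    ultimately have "(R - x) * (R - y) = 0 \<or> (R + x) * (R + y) = 0"
      using B by (smt (verit))
    then show ?thesis
      using le ge by (auto simp: abs_if)
  qed
  ultimately show ?thesis
    using boundary_iff by blast
qed

section \<open>Weil sextics\<close>

lemma sextic_eq_weil_factors_iff:
  "map_poly real_of_int [: int q ^ 3, a1 * int q ^ 2, a2 * int q, a3, a2, a1, 1 :]
      = (\<Prod>t\<leftarrow>[x, y, z]. weil_factor (real q) t) \<longleftrightarrow>
    real_of_int a1 = - (x + y + z) \<and> real_of_int a2 - 3 * real q = x * y + x * z + y * z \<and>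
    real_of_int a3 - 2 * real q * real_of_int a1 = - (x * y * z)"
  (is "?lhs = ?rhs \<longleftrightarrow> _")
proof -
  let ?Q = "real q" and ?e1 = "x + y + z" and ?e2 = "x * y + x * z + y * z"
  have lhs: "?lhs = [: ?Q ^ 3, of_int a1 * ?Q\<^sup>2, of_int a2 * ?Q, of_int a3, of_int a2, of_int a1, 1 :]"
    by (simp add: map_poly_pCons)
  have rhs: "?rhs = [: ?Q ^ 3, - ?e1 * ?Q\<^sup>2, (3 * ?Q + ?e2) * ?Q,
      - (x * y * z) - 2 * ?Q * ?e1, 3 * ?Q + ?e2, - ?e1, 1 :]"
    by (simp add: weil_factor_def algebra_simps power2_eq_square power3_eq_cube)
  have "?lhs = ?rhs \<longleftrightarrow>
      of_int a1 = - ?e1 \<and> of_int a2 = 3 * ?Q + ?e2 \<and> of_int a3 = - (x * y * z) - 2 * ?Q * ?e1"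
  proof
    assume "?lhs = ?rhs"
    then show "of_int a1 = - ?e1 \<and> of_int a2 = 3 * ?Q + ?e2 \<and> of_int a3 = - (x * y * z) - 2 * ?Q * ?e1"
      unfolding lhs rhs by simp
  next
    assume "of_int a1 = - ?e1 \<and> of_int a2 = 3 * ?Q + ?e2 \<and> of_int a3 = - (x * y * z) - 2 * ?Q * ?e1"
    then show "?lhs = ?rhs"
      unfolding lhs rhs by (simp only:)
  qed
  also have "\<dots> \<longleftrightarrow> of_int a1 = - ?e1 \<and> of_int a2 - 3 * ?Q = ?e2 \<and> of_int a3 - 2 * ?Q * of_int a1 = - (x * y * z)"
  proof (cases "of_int a1 = - ?e1")
    case True
    then have "2 * ?Q * of_int a1 = - (2 * ?Q * ?e1)"
      by (metis mult_minus_right)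
    with True show ?thesis
      by (smt (verit))
  qed simp
  finally show ?thesis .
qed

lemma weil_poly_3_iff: "weil_poly q 3 h \<longleftrightarrow> (\<exists>x y z. weil_traces q [x, y, z] h)"
  by (auto simp: weil_poly_iff_weil_traces numeral_3_eq_3 length_Suc_conv) blast

lemma sextic_weil_traces_iff:
  assumes "h = [: int q ^ 3, a1 * int q ^ 2, a2 * int q, a3, a2, a1, 1 :]"
  shows "weil_traces q [x, y, z] h \<longleftrightarrow>
    \<bar>x\<bar> \<le> 2 * sqrt (real q) \<and> \<bar>y\<bar> \<le> 2 * sqrt (real q) \<and> \<bar>z\<bar> \<le> 2 * sqrt (real q) \<and>
    real_of_int a1 = - (x + y + z) \<and> real_of_int a2 - 3 * real q = x * y + x * z + y * z \<and>
    real_of_int a3 - 2 * real q * real_of_int a1 = - (x * y * z)"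
  unfolding weil_traces_def assms sextic_eq_weil_factors_iff by auto

lemma trace_cubic_at_boundary:
  fixes a1 a2 a3 Q :: real
  assumes "0 \<le> Q"
  defines "R \<equiv> 2 * sqrt Q"
  shows "a1 * R\<^sup>2 - R ^ 3 - (a2 - 3 * Q) * R + (a3 - 2 * Q * a1)
      = a3 + 2 * Q * a1 - 2 * sqrt Q * a2 - 2 * Q * sqrt Q"
    and "R ^ 3 + a1 * R\<^sup>2 + (a2 - 3 * Q) * R + (a3 - 2 * Q * a1)
      = a3 + 2 * Q * a1 + 2 * sqrt Q * a2 + 2 * Q * sqrt Q"
proof -
  have "R\<^sup>2 = 4 * Q" "R ^ 3 = 8 * Q * sqrt Q"
    using assms(1) by (simp_all add: R_def power_mult_distrib power3_eq_cube)
  then show "a1 * R\<^sup>2 - R ^ 3 - (a2 - 3 * Q) * R + (a3 - 2 * Q * a1)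
      = a3 + 2 * Q * a1 - 2 * sqrt Q * a2 - 2 * Q * sqrt Q"
    and "R ^ 3 + a1 * R\<^sup>2 + (a2 - 3 * Q) * R + (a3 - 2 * Q * a1)
      = a3 + 2 * Q * a1 + 2 * sqrt Q * a2 + 2 * Q * sqrt Q"
    by (simp_all add: R_def algebra_simps)
qed

lemma sextic_weil_poly_iff_bounds:
  fixes a1 a2 a3 :: int
  assumes "h = [: int q ^ 3, a1 * int q ^ 2, a2 * int q, a3, a2, a1, 1 :]"
  shows "weil_poly q 3 h \<longleftrightarrow>
      \<bar>real_of_int a1\<bar> \<le> 6 * sqrt (real q) \<and>
      4 * sqrt (real q) * \<bar>real_of_int a1\<bar> - 9 * real q \<le> real_of_int a2 \<and>
      real_of_int a2 \<le> (1/3) * real_of_int a1 ^ 2 + 3 * real q \<and>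
      - (2/27) * real_of_int a1 ^ 3 + (1/3) * real_of_int a1 * real_of_int a2 + real q * real_of_int a1
        - (2/27) * (real_of_int a1 ^ 2 - 3 * real_of_int a2 + 9 * real q) powr (3/2) \<le> real_of_int a3 \<and>
      real_of_int a3 \<le> - (2/27) * real_of_int a1 ^ 3 + (1/3) * real_of_int a1 * real_of_int a2 + real q * real_of_int a1
        + (2/27) * (real_of_int a1 ^ 2 - 3 * real_of_int a2 + 9 * real q) powr (3/2) \<and>
      - 2 * real q * real_of_int a1 - 2 * sqrt (real q) * real_of_int a2 - 2 * real q * sqrt (real q) \<le> real_of_int a3 \<and>
      real_of_int a3 \<le> - 2 * real q * real_of_int a1 + 2 * sqrt (real q) * real_of_int a2 + 2 * real q * sqrt (real q)"
  (is "_ \<longleftrightarrow> ?bounds")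
proof -
  define R A B C where "R = 2 * sqrt (real q)" and "A = real_of_int a1"
    and "B = real_of_int a2 - 3 * real q" and "C = real_of_int a3 - 2 * real q * real_of_int a1"
  have "weil_poly q 3 h \<longleftrightarrow> (\<exists>x y z. \<bar>x\<bar> \<le> R \<and> \<bar>y\<bar> \<le> R \<and> \<bar>z\<bar> \<le> R \<and>
      A = - (x + y + z) \<and> B = x * y + x * z + y * z \<and> C = - (x * y * z))"
    by (simp add: weil_poly_3_iff sextic_weil_traces_iff[OF assms] R_def A_def B_def C_def)
  also have "\<dots> \<longleftrightarrow> \<bar>A\<bar> \<le> 3 * R \<and> 2 * R * \<bar>A\<bar> - 3 * R\<^sup>2 \<le> B \<and> B \<le> A\<^sup>2 / 3 \<and>
      \<bar>27 * C + 2 * A ^ 3 - 9 * A * B\<bar> \<le> 2 * (A\<^sup>2 - 3 * B) powr (3/2) \<and>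
      A * R\<^sup>2 - R ^ 3 - B * R + C \<le> 0 \<and> 0 \<le> R ^ 3 + A * R\<^sup>2 + B * R + C"
    using cubic_roots_in_interval_conditions cubic_roots_in_interval_exist by meson
  also have "\<dots> \<longleftrightarrow> ?bounds"
  proof -
    let ?M = "- (2/27) * A ^ 3 + (1/3) * A * real_of_int a2 + real q * A"
    have "R\<^sup>2 = 4 * real q"
      by (simp add: R_def power_mult_distrib)
    then have a: "\<bar>A\<bar> \<le> 3 * R \<longleftrightarrow> \<bar>A\<bar> \<le> 6 * sqrt (real q)"
      and b: "2 * R * \<bar>A\<bar> - 3 * R\<^sup>2 \<le> B \<longleftrightarrow> 4 * sqrt (real q) * \<bar>A\<bar> - 9 * real q \<le> real_of_int a2"
      and b': "B \<le> A\<^sup>2 / 3 \<longleftrightarrow> real_of_int a2 \<le> (1/3) * A ^ 2 + 3 * real q"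
      by (auto simp: R_def B_def)
    have X: "A\<^sup>2 - 3 * B = A ^ 2 - 3 * real_of_int a2 + 9 * real q"
      and N: "27 * C + 2 * A ^ 3 - 9 * A * B = 27 * (real_of_int a3 - ?M)"
      by (simp_all add: A_def B_def C_def algebra_simps)
    have c: "\<bar>27 * C + 2 * A ^ 3 - 9 * A * B\<bar> \<le> 2 * (A\<^sup>2 - 3 * B) powr (3/2) \<longleftrightarrow>
        ?M - (2/27) * (A ^ 2 - 3 * real_of_int a2 + 9 * real q) powr (3/2) \<le> real_of_int a3 \<and>
        real_of_int a3 \<le> ?M + (2/27) * (A ^ 2 - 3 * real_of_int a2 + 9 * real q) powr (3/2)"
      unfolding X N by (auto simp: abs_le_iff)
    have "A * R\<^sup>2 - R ^ 3 - B * R + C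
        = real_of_int a3 + 2 * real q * A - 2 * sqrt (real q) * real_of_int a2 - 2 * real q * sqrt (real q)"
      "R ^ 3 + A * R\<^sup>2 + B * R + C
        = real_of_int a3 + 2 * real q * A + 2 * sqrt (real q) * real_of_int a2 + 2 * real q * sqrt (real q)"
      unfolding R_def A_def B_def C_def by (rule trace_cubic_at_boundary, simp)+
    then have d: "A * R\<^sup>2 - R ^ 3 - B * R + C \<le> 0 \<longleftrightarrow>
        real_of_int a3 \<le> - 2 * real q * A + 2 * sqrt (real q) * real_of_int a2 + 2 * real q * sqrt (real q)"
      and d': "0 \<le> R ^ 3 + A * R\<^sup>2 + B * R + C \<longleftrightarrow>
        - 2 * real q * A - 2 * sqrt (real q) * real_of_int a2 - 2 * real q * sqrt (real q) \<le> real_of_int a3"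
      by linarith+
    show ?thesis
      unfolding a b b' c d d' A_def[symmetric] by blast
  qed
  finally show ?thesis .
qed

lemma sextic_weil_poly_real_root_iff:
  fixes a1 a2 a3 :: int
  assumes h: "h = [: int q ^ 3, a1 * int q ^ 2, a2 * int q, a3, a2, a1, 1 :]" and "weil_poly q 3 h"
  shows "has_real_root h \<longleftrightarrow>
        \<bar>real_of_int a1\<bar> = 6 * sqrt (real q) \<or>
        4 * sqrt (real q) * \<bar>real_of_int a1\<bar> - 9 * real q = real_of_int a2 \<or>
        - 2 * real q * real_of_int a1 - 2 * sqrt (real q) * real_of_int a2 - 2 * real q * sqrt (real q) = real_of_int a3 \<or>
        real_of_int a3 = - 2 * real q * real_of_int a1 + 2 * sqrt (real q) * real_of_int a2 + 2 * real q * sqrt (real q)"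
proof -
  define R A B C where "R = 2 * sqrt (real q)" and "A = real_of_int a1"
    and "B = real_of_int a2 - 3 * real q" and "C = real_of_int a3 - 2 * real q * real_of_int a1"
  obtain x y z where traces: "weil_traces q [x, y, z] h"
    using assms(2) weil_poly_3_iff by blast
  then have "\<bar>x\<bar> \<le> R" "\<bar>y\<bar> \<le> R" "\<bar>z\<bar> \<le> R"
    "A = - (x + y + z)" "B = x * y + x * z + y * z" "C = - (x * y * z)"
    unfolding R_def A_def B_def C_def using sextic_weil_traces_iff[OF h] by blast+
  note boundary = cubic_root_on_boundary_iff[OF this]
  have "R\<^sup>2 = 4 * real q"
    by (simp add: R_def power_mult_distrib)
  then have a: "\<bar>A\<bar> = 3 * R \<longleftrightarrow> \<bar>real_of_int a1\<bar> = 6 * sqrt (real q)"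
    and b: "B = 2 * R * \<bar>A\<bar> - 3 * R\<^sup>2 \<longleftrightarrow> 4 * sqrt (real q) * \<bar>real_of_int a1\<bar> - 9 * real q = real_of_int a2"
    by (auto simp: R_def A_def B_def)
  have "A * R\<^sup>2 - R ^ 3 - B * R + C
        = real_of_int a3 + 2 * real q * A - 2 * sqrt (real q) * real_of_int a2 - 2 * real q * sqrt (real q)"
      "R ^ 3 + A * R\<^sup>2 + B * R + C
        = real_of_int a3 + 2 * real q * A + 2 * sqrt (real q) * real_of_int a2 + 2 * real q * sqrt (real q)"
    unfolding R_def A_def B_def C_def by (rule trace_cubic_at_boundary, simp)+
  then have d: "A * R\<^sup>2 - R ^ 3 - B * R + C = 0 \<longleftrightarrow>
        real_of_int a3 = - 2 * real q * real_of_int a1 + 2 * sqrt (real q) * real_of_int a2 + 2 * real q * sqrt (real q)"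
    and d': "R ^ 3 + A * R\<^sup>2 + B * R + C = 0 \<longleftrightarrow>
        - 2 * real q * real_of_int a1 - 2 * sqrt (real q) * real_of_int a2 - 2 * real q * sqrt (real q) = real_of_int a3"
    unfolding A_def by linarith+
  have "has_real_root h \<longleftrightarrow> \<bar>x\<bar> = R \<or> \<bar>y\<bar> = R \<or> \<bar>z\<bar> = R"
    using weil_traces_real_root_iff[OF traces] by (simp add: R_def)
  then show ?thesis
    unfolding boundary a b d d' by blast
qed

lemma sqrt_of_nat_in_Rats_imp_square:
  assumes "sqrt (real q) \<in> \<rat>"
  shows "\<exists>s. q = s\<^sup>2"
proof -
  obtain a b :: nat where "b \<noteq> 0" and ab: "\<bar>sqrt (real q)\<bar> = real a / real b" and "coprime a b"
    using assms by (rule Rats_abs_nat_div_natE)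
  then have "real b * sqrt (real q) = real a"
    by (simp add: field_simps)
  then have "real q * (real b)\<^sup>2 = (real a)\<^sup>2"
    by (metis mult.commute of_nat_0_le_iff power_mult_distrib real_sqrt_pow2)
  then have qab: "q * b\<^sup>2 = a\<^sup>2"
    by (metis of_nat_eq_iff of_nat_mult of_nat_power)
  have "coprime (b\<^sup>2) (a\<^sup>2)"
    using \<open>coprime a b\<close> by (simp add: coprime_commute)
  moreover have "b\<^sup>2 dvd a\<^sup>2"
    by (metis qab dvd_triv_right)
  ultimately have "b\<^sup>2 = 1"
    by (rule coprime_common_divisor_nat[OF _ dvd_refl])
  with qab have "q = a\<^sup>2"
    by simp
  then show ?thesis ..
qed

lemma Rats_linear_combination_eq_0:
  fixes r :: real
  assumes "r \<notin> \<rat>" and "of_int k + r * of_int m = 0"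
  shows "m = 0 \<and> k = 0"
proof -
  have "m = 0"
  proof (rule ccontr)
    assume "m \<noteq> 0"
    then have "r = - of_int k / of_int m"
      using assms(2) by (simp add: field_simps)
    then have "r \<in> \<rat>" by simp
    with assms(1) show False ..
  qed
  with assms(2) show ?thesis by simp
qed

text \<open>A trace \<open>\<plusminus>2\<surd>q\<close> makes one of the bounds (d) an equality,
  \<open>(a3 + 2q a1) \<plusminus> \<surd>q (2 a2 + 2q) = 0\<close>; as \<open>\<surd>q\<close> is irrational, both integers vanish.\<close>

lemma sextic_weil_poly_real_root_nonsquare_coeffs:
  fixes a1 a2 a3 :: int
  assumes h: "h = [: int q ^ 3, a1 * int q ^ 2, a2 * int q, a3, a2, a1, 1 :]"
    and "weil_poly q 3 h" and "has_real_root h" and nonsquare: "\<not> (\<exists>s. q = s\<^sup>2)"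
  shows "a2 = - int q \<and> a3 = - 2 * int q * a1"
proof -
  define r where "r = sqrt (real q)"
  define A B C where "A = real_of_int a1" and "B = real_of_int a2 - 3 * real q"
    and "C = real_of_int a3 - 2 * real q * real_of_int a1"
  obtain x y z where traces: "weil_traces q [x, y, z] h"
    using assms(2) weil_poly_3_iff by blast
  then have "A = - (x + y + z)" "B = x * y + x * z + y * z" "C = - (x * y * z)"
    unfolding A_def B_def C_def using sextic_weil_traces_iff[OF h] by blast+
  note cubic = cubic_eq_prod_roots[OF this]
  obtain t where "t \<in> {x, y, z}" "\<bar>t\<bar> = 2 * r"
    using assms(3) weil_traces_real_root_iff[OF traces] by (auto simp: r_def)
  then have "t ^ 3 + A * t\<^sup>2 + B * t + C = 0" "t = 2 * r \<or> t = - (2 * r)"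
    using cubic[of t] by (auto simp: abs_if split: if_splits)
  then have "(2 * r) ^ 3 + A * (2 * r)\<^sup>2 + B * (2 * r) + C = 0
      \<or> A * (2 * r)\<^sup>2 - (2 * r) ^ 3 - B * (2 * r) + C = 0"
    by auto
  moreover have "A * (2 * r)\<^sup>2 - (2 * r) ^ 3 - B * (2 * r) + C
        = real_of_int a3 + 2 * real q * A - 2 * r * real_of_int a2 - 2 * real q * r"
      "(2 * r) ^ 3 + A * (2 * r)\<^sup>2 + B * (2 * r) + C
        = real_of_int a3 + 2 * real q * A + 2 * r * real_of_int a2 + 2 * real q * r"
    unfolding r_def A_def B_def C_def by (rule trace_cubic_at_boundary, simp)+
  ultimately have "real_of_int (a3 + 2 * int q * a1) + r * real_of_int (2 * a2 + 2 * int q) = 0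
      \<or> real_of_int (a3 + 2 * int q * a1) + r * real_of_int (- (2 * a2 + 2 * int q)) = 0"
    unfolding A_def by (auto simp: algebra_simps)
  moreover have "r \<notin> \<rat>"
    using nonsquare sqrt_of_nat_in_Rats_imp_square unfolding r_def by blast
  ultimately have "2 * a2 + 2 * int q = 0 \<and> a3 + 2 * int q * a1 = 0"
    using Rats_linear_combination_eq_0 by fastforce
  then show ?thesis
    by auto
qed

lemma sextic_weil_poly_real_root_nonsquare:
  fixes a1 a2 a3 :: int
  assumes h: "h = [: int q ^ 3, a1 * int q ^ 2, a2 * int q, a3, a2, a1, 1 :]"
    and "weil_poly q 3 h" and "has_real_root h" and nonsquare: "\<not> (\<exists>s. q = s\<^sup>2)"
  shows "\<exists>h0. weil_poly q 1 h0 \<and> h = [: - int q, 0, 1 :]\<^sup>2 * h0"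
proof -
  define r where "r = sqrt (real q)"
  have a2: "a2 = - int q" and a3: "a3 = - 2 * int q * a1"
    using sextic_weil_poly_real_root_nonsquare_coeffs[OF assms] by auto
  have h_factor: "h = [: - int q, 0, 1 :]\<^sup>2 * [: int q, a1, 1 :]"
    unfolding h a2 a3 by (simp add: power2_eq_square power3_eq_cube algebra_simps)
  have "q > 0"
    using nonsquare by (metis gr0I power_zero_numeral)
  have "4 * r * \<bar>real_of_int a1\<bar> - 9 * real q \<le> real_of_int a2"
    using sextic_weil_poly_iff_bounds[OF h] assms(2) unfolding r_def by blast
  then have "4 * r * \<bar>real_of_int a1\<bar> \<le> 8 * real q"
    by (simp add: a2)
  also have "8 * real q = 4 * r * (2 * r)"
    by (simp add: r_def)
  finally have "4 * r * \<bar>real_of_int a1\<bar> \<le> 4 * r * (2 * r)" .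
  moreover have "0 < 4 * r"
    using \<open>q > 0\<close> by (simp add: r_def)
  ultimately have "\<bar>- real_of_int a1\<bar> \<le> 2 * r"
    using mult_le_cancel_left_pos by simp
  then have "weil_traces q [- real_of_int a1] [: int q, a1, 1 :]"
    by (simp add: weil_traces_def weil_factor_def map_poly_pCons r_def)
  then have "weil_poly q 1 [: int q, a1, 1 :]"
    unfolding weil_poly_iff_weil_traces by (intro conjI exI[of _ "[- real_of_int a1]"]) simp_all
  with h_factor show ?thesis by blast
qed

lemma weil_poly_3_real_root_square_cases:
  assumes s: "q = s\<^sup>2" and "weil_poly q 3 h" and "has_real_root h"
  shows "\<exists>k l. (k + l = 3 \<and> h = [:int s, 1:] ^ (2 * k) * [:- int s, 1:] ^ (2 * l)) \<or>
    (k + l = 2 \<and> (\<exists>h0. weil_poly q 1 h0 \<and> \<not> has_real_root h0 \<and>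
      h = [:int s, 1:] ^ (2 * k) * [:- int s, 1:] ^ (2 * l) * h0)) \<or>
    (k + l = 1 \<and> (\<exists>h0. weil_poly q 2 h0 \<and> \<not> has_real_root h0 \<and>
      h = [:int s, 1:] ^ (2 * k) * [:- int s, 1:] ^ (2 * l) * h0))"
proof -
  obtain k l us h0 where h0: "h = [:int s, 1:] ^ (2 * k) * [:- int s, 1:] ^ (2 * l) * h0"
    and len: "k + l + length us = 3" "0 < k + l"
    and traces: "weil_traces q us h0" and "\<not> has_real_root h0"
    using weil_poly_real_root_square[OF s assms(2,3)] by blast
  show ?thesis
  proof (cases "us = []")
    case True
    have "map_poly real_of_int h0 = map_poly real_of_int 1"
      using traces True by (simp add: weil_traces_def one_pCons map_poly_pCons)
    then have "h = [:int s, 1:] ^ (2 * k) * [:- int s, 1:] ^ (2 * l)"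
      unfolding h0 map_poly_of_int_eq_iff by simp
    moreover have "k + l = 3" using len True by simp
    ultimately show ?thesis by blast
  next
    case False
    then have "weil_poly q (length us) h0"
      using traces by (auto simp: weil_poly_iff_weil_traces)
    moreover have "0 < length us"
      using False by simp
    then have "length us = 1 \<and> k + l = 2 \<or> length us = 2 \<and> k + l = 1"
      using len by presburger
    ultimately show ?thesis
      using h0 \<open>\<not> has_real_root h0\<close> by (metis (no_types))
  qed
qed

lemma sextic_weil_poly_real_root_iff_factorization:
  fixes q :: nat and a1 a2 a3 :: int and h :: "int poly"
  assumes h: "h = [: int q ^ 3, a1 * int q ^ 2, a2 * int q, a3, a2, a1, 1 :]"
  shows "weil_poly q 3 h \<and> has_real_root h \<longleftrightarrow>
      (\<exists>k l :: nat.
        ((\<not> (\<exists>s::nat. q = s ^ 2)) \<and>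
           (\<exists>h0. weil_poly q 1 h0 \<and> h = [: - int q, 0, 1 :] ^ 2 * h0))
        \<or> (\<exists>s::nat. q = s ^ 2 \<and> k + l = 3 \<and>
             h = [: int s, 1 :] ^ (2 * k) * [: - int s, 1 :] ^ (2 * l))
        \<or> (\<exists>s::nat. q = s ^ 2 \<and> k + l = 2 \<and>
             (\<exists>h0. weil_poly q 1 h0 \<and> \<not> has_real_root h0 \<and>
               h = [: int s, 1 :] ^ (2 * k) * [: - int s, 1 :] ^ (2 * l) * h0))
        \<or> (\<exists>s::nat. q = s ^ 2 \<and> k + l = 1 \<and>
             (\<exists>h0. weil_poly q 2 h0 \<and> \<not> has_real_root h0 \<and>
               h = [: int s, 1 :] ^ (2 * k) * [: - int s, 1 :] ^ (2 * l) * h0)))"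
  (is "_ \<longleftrightarrow> ?factorization")
proof
  assume real_root: "weil_poly q 3 h \<and> has_real_root h"
  show ?factorization
  proof (cases "\<exists>s::nat. q = s ^ 2")
    case True
    then obtain s where s: "q = s\<^sup>2" by blast
    show ?thesis
      using weil_poly_3_real_root_square_cases[OF s] real_root s by blast
  next
    case False
    then show ?thesis
      using sextic_weil_poly_real_root_nonsquare[OF h] real_root by blast
  qed
next
  assume ?factorization
  then show "weil_poly q 3 h \<and> has_real_root h"
  proof (elim exE disjE conjE)
    fix h0 assume "weil_poly q 1 h0" "h = [: - int q, 0, 1 :] ^ 2 * h0"
    then show ?thesis
      using weil_poly_difference_of_squares_factor by blast
  next
    fix k l s assume "q = s\<^sup>2" "k + l = 3" "h = [: int s, 1 :] ^ (2 * k) * [: - int s, 1 :] ^ (2 * l)"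
    then show ?thesis
      using weil_poly_square_factors[OF _ weil_traces_Nil, of q s k l 3] by simp
  next
    fix k l s h0 assume "q = s\<^sup>2" "k + l = 2" "weil_poly q 1 h0"
      "h = [: int s, 1 :] ^ (2 * k) * [: - int s, 1 :] ^ (2 * l) * h0"
    then show ?thesis
      using weil_poly_square_factors[of q s _ h0 k l 3] by (auto simp: weil_poly_iff_weil_traces)
  next
    fix k l s h0 assume "q = s\<^sup>2" "k + l = 1" "weil_poly q 2 h0"
      "h = [: int s, 1 :] ^ (2 * k) * [: - int s, 1 :] ^ (2 * l) * h0"
    then show ?thesis
      using weil_poly_square_factors[of q s _ h0 k l 3] by (auto simp: weil_poly_iff_weil_traces)
  qed
qed

theorem theoremA:
  fixes p q n :: nat and a1 a2 a3 :: int and h :: "int poly"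
  assumes "prime p" and "n > 0" and "q = p ^ n"
    and "h = [: int q ^ 3, a1 * int q ^ 2, a2 * int q, a3, a2, a1, 1 :]"
  shows
   "(weil_poly q 3 h \<longleftrightarrow>
      \<bar>real_of_int a1\<bar> \<le> 6 * sqrt (real q) \<and>
      4 * sqrt (real q) * \<bar>real_of_int a1\<bar> - 9 * real q \<le> real_of_int a2 \<and>
      real_of_int a2 \<le> (1/3) * real_of_int a1 ^ 2 + 3 * real q \<and>
      - (2/27) * real_of_int a1 ^ 3 + (1/3) * real_of_int a1 * real_of_int a2 + real q * real_of_int a1
        - (2/27) * (real_of_int a1 ^ 2 - 3 * real_of_int a2 + 9 * real q) powr (3/2) \<le> real_of_int a3 \<and>
      real_of_int a3 \<le> - (2/27) * real_of_int a1 ^ 3 + (1/3) * real_of_int a1 * real_of_int a2 + real q * real_of_int a1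
        + (2/27) * (real_of_int a1 ^ 2 - 3 * real_of_int a2 + 9 * real q) powr (3/2) \<and>
      - 2 * real q * real_of_int a1 - 2 * sqrt (real q) * real_of_int a2 - 2 * real q * sqrt (real q) \<le> real_of_int a3 \<and>
      real_of_int a3 \<le> - 2 * real q * real_of_int a1 + 2 * sqrt (real q) * real_of_int a2 + 2 * real q * sqrt (real q))
    \<and>
    (weil_poly q 3 h \<longrightarrow>
      (has_real_root h \<longleftrightarrow>
        \<bar>real_of_int a1\<bar> = 6 * sqrt (real q) \<or>
        4 * sqrt (real q) * \<bar>real_of_int a1\<bar> - 9 * real q = real_of_int a2 \<or>
        - 2 * real q * real_of_int a1 - 2 * sqrt (real q) * real_of_int a2 - 2 * real q * sqrt (real q) = real_of_int a3 \<or>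
        real_of_int a3 = - 2 * real q * real_of_int a1 + 2 * sqrt (real q) * real_of_int a2 + 2 * real q * sqrt (real q)))
    \<and>
    (weil_poly q 3 h \<and> has_real_root h \<longleftrightarrow>
      (\<exists>k l :: nat.
        ((\<not> (\<exists>s::nat. q = s ^ 2)) \<and>
           (\<exists>h0. weil_poly q 1 h0 \<and> h = [: - int q, 0, 1 :] ^ 2 * h0))
        \<or> (\<exists>s::nat. q = s ^ 2 \<and> k + l = 3 \<and>
             h = [: int s, 1 :] ^ (2 * k) * [: - int s, 1 :] ^ (2 * l))
        \<or> (\<exists>s::nat. q = s ^ 2 \<and> k + l = 2 \<and>
             (\<exists>h0. weil_poly q 1 h0 \<and> \<not> has_real_root h0 \<and>
               h = [: int s, 1 :] ^ (2 * k) * [: - int s, 1 :] ^ (2 * l) * h0))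
        \<or> (\<exists>s::nat. q = s ^ 2 \<and> k + l = 1 \<and>
             (\<exists>h0. weil_poly q 2 h0 \<and> \<not> has_real_root h0 \<and>
               h = [: int s, 1 :] ^ (2 * k) * [: - int s, 1 :] ^ (2 * l) * h0))))"
  using sextic_weil_poly_iff_bounds[OF assms(4)] sextic_weil_poly_real_root_iff[OF assms(4)]
    sextic_weil_poly_real_root_iff_factorization[OF assms(4)]
  by blast

end
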